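(* For real $p\neq 0$, the inequality $2\left( \frac{\tanh x}{x}\right) ^{p}<\left( \frac{x}{\sinh x}\right) ^{4p}+1$ holds for all $x\in(0,\pi/2)$ if and only if $p<0$ or $p\geq 6/5$. *)

theory Defs
  imports Complex_Main
begin

end

theory Submission
  imports Defs "HOL-Analysis.Complex_Transcendental"
begin

text \<open>
  Write \<open>L x = ln (sinh x / x)\<close>. Taking logarithms, the inequality becomes
  \<open>p (3 L x - ln (cosh x)) < ln (cosh (2 p L x))\<close>. Both sides are controlled by
  Taylor-type bounds: those for \<open>tanh\<close> and \<open>ln \<circ> cosh\<close> follow by repeatedly
  integrating \<open>tanh' = 1 - tanh\<^sup>2\<close>, and those for \<open>L\<close> by telescoping the duplication
  formula \<open>L x = L (x/2) + ln (cosh (x/2))\<close>. For \<open>p < 0\<close> the left side is \<open>\<le> 0\<close>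
  and the right side positive. Since \<open>ln (cosh w) / w\<close> increases, the case \<open>p \<ge> 6/5\<close>
  reduces to \<open>p = 6/5\<close>, which the bounds turn into a polynomial inequality on
  \<open>x\<^sup>2 \<le> (\<pi>/2)\<^sup>2\<close>. For \<open>0 < p < 6/5\<close> the inequality fails at \<open>x\<^sup>2 = 3/2 - 5p/4\<close>,
  where the fourth-order terms of the two sides compare the wrong way.
\<close>

lemma le_if_deriv_le:
  fixes f g f' g' :: "real \<Rightarrow> real"
  assumes "0 \<le> x" "f 0 \<le> g 0"
    and "\<And>t. 0 \<le> t \<Longrightarrow> t \<le> x \<Longrightarrow> (f has_real_derivative f' t) (at t)"
    and "\<And>t. 0 \<le> t \<Longrightarrow> t \<le> x \<Longrightarrow> (g has_real_derivative g' t) (at t)"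
    and "\<And>t. 0 \<le> t \<Longrightarrow> t \<le> x \<Longrightarrow> f' t \<le> g' t"
  shows "f x \<le> g x"
proof -
  have "g 0 - f 0 \<le> g x - f x"
  proof (rule DERIV_nonneg_imp_nondecreasing[OF assms(1)])
    fix t assume "0 \<le> t" "t \<le> x"
    with assms show "\<exists>y. ((\<lambda>t. g t - f t) has_real_derivative y) (at t) \<and> 0 \<le> y"
      by (intro exI[of _ "g' t - f' t"]) (auto intro: DERIV_diff)
  qed
  with assms(2) show ?thesis by simp
qed

lemma nonneg_by_halving:
  fixes g :: "real \<Rightarrow> real"
  assumes "0 < x" "0 \<le> c"
    and step: "\<And>w. 0 < w \<Longrightarrow> w \<le> x \<Longrightarrow> g (w/2) \<le> g w"
    and tail: "\<And>n::nat. - c / 4^n \<le> g (x / 2^n)"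
  shows "0 \<le> g x"
proof (rule ccontr)
  assume "\<not> 0 \<le> g x"
  define a where "a = - g x"
  have "0 < a" using \<open>\<not> 0 \<le> g x\<close> by (simp add: a_def)
  obtain n :: nat where "c / a < 4^n"
    using real_arch_pow[of 4 "c / a"] by auto
  with \<open>0 < a\<close> have "c / 4^n < a"
    by (simp add: divide_less_eq mult.commute)
  moreover have mono: "g (x / 2^n) \<le> g x" for n :: nat
  proof (induction n)
    case (Suc n)
    have "g (x / 2^n / 2) \<le> g (x / 2^n)"
      using assms(1) by (intro step) (auto simp: divide_le_eq)
    with Suc show ?case by (simp add: field_simps)
  qed simp
  ultimately show False using tail[of n] mono[of n] by (simp add: a_def)
qed

lemma power2_div_two_pow: "(x / 2^n)^2 = (x::real)^2 / 4^n"
  by (simp add: power_divide power2_eq_square flip: power_mult_distrib)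

subsection \<open>Bounds for \<open>tanh\<close> and \<open>ln \<circ> cosh\<close>\<close>

lemma tanh_le_self: "0 \<le> x \<Longrightarrow> tanh x \<le> (x::real)"
  by (rule le_if_deriv_le[where f = tanh and g = "\<lambda>t. t"
        and f' = "\<lambda>t. 1 - tanh t ^ 2" and g' = "\<lambda>_. 1"])
    (auto intro!: derivative_eq_intros)

lemma tanh_ge_taylor3: "0 \<le> x \<Longrightarrow> x - x^3/3 \<le> tanh (x::real)"
  by (rule le_if_deriv_le[where f = "\<lambda>t. t - t^3/3" and g = tanh
        and f' = "\<lambda>t. 1 - t^2" and g' = "\<lambda>t. 1 - tanh t ^ 2"])
    (auto intro!: derivative_eq_intros power_mono tanh_le_self)

lemma tanh_le_taylor5:
  fixes x :: real
  assumes "0 \<le> x" "x^2 \<le> 3"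
  shows "tanh x \<le> x - x^3/3 + 2*x^5/15"
proof (rule le_if_deriv_le[where f = tanh and g = "\<lambda>t. t - t^3/3 + 2*t^5/15"
      and f' = "\<lambda>t. 1 - tanh t ^ 2" and g' = "\<lambda>t. 1 - t^2 + 2*t^4/3"])
  fix t :: real assume "0 \<le> t" "t \<le> x"
  then have "t^2 \<le> 3" using assms power_mono[of t x 2] by linarith
  with \<open>0 \<le> t\<close> have "0 \<le> t - t^3/3"
    by (simp add: power2_eq_square power3_eq_cube field_simps mult_left_mono)
  then have "(t - t^3/3)^2 \<le> tanh t ^ 2"
    using tanh_ge_taylor3[OF \<open>0 \<le> t\<close>] by (simp add: power_mono)
  moreover have "(t - t^3/3)^2 = t^2 - 2*t^4/3 + t^6/9"
    by (simp add: algebra_simps power2_eq_square eval_nat_numeral)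
  moreover have "0 \<le> t^6" by simp
  ultimately show "1 - tanh t ^ 2 \<le> 1 - t^2 + 2*t^4/3" by linarith
qed (use assms in \<open>auto intro!: derivative_eq_intros\<close>)

lemma tanh_ge_taylor7:
  fixes x :: real
  assumes "0 \<le> x" "x^2 \<le> 3"
  shows "x - x^3/3 + 2*x^5/15 - 17*x^7/315 \<le> tanh x"
proof (rule le_if_deriv_le[where f = "\<lambda>t. t - t^3/3 + 2*t^5/15 - 17*t^7/315" and g = tanh
      and f' = "\<lambda>t. 1 - t^2 + 2*t^4/3 - 17*t^6/45" and g' = "\<lambda>t. 1 - tanh t ^ 2"])
  fix t :: real assume "0 \<le> t" "t \<le> x"
  then have t2: "t^2 \<le> 3" using assms power_mono[of t x 2] by linarith
  have "tanh t ^ 2 \<le> (t - t^3/3 + 2*t^5/15)^2"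
    using tanh_le_taylor5[OF \<open>0 \<le> t\<close> t2] \<open>0 \<le> t\<close> by (simp add: power_mono)
  moreover have "(t - t^3/3 + 2*t^5/15)^2
      = t^2 - 2*t^4/3 + 17*t^6/45 - 4*t^8/45 + 4*t^10/225"
    by (simp add: algebra_simps power2_eq_square eval_nat_numeral)
  moreover have "t^8 * t^2 \<le> t^8 * 5"
    using t2 by (intro mult_left_mono) auto
  then have "4*t^10/225 \<le> 4*t^8/45"
    by (simp add: eval_nat_numeral)
  ultimately show "1 - t^2 + 2*t^4/3 - 17*t^6/45 \<le> 1 - tanh t ^ 2" by linarith
qed (use assms in \<open>auto intro!: derivative_eq_intros\<close>)

lemma has_real_derivative_ln_cosh: "((\<lambda>t. ln (cosh t)) has_real_derivative tanh x) (at x)"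
  by (auto intro!: derivative_eq_intros simp: tanh_def)

lemma ln_cosh_le_square_half: "0 \<le> x \<Longrightarrow> ln (cosh x) \<le> (x::real)^2/2"
proof (rule le_if_deriv_le[where f = "\<lambda>t. ln (cosh t)" and g = "\<lambda>t. t^2/2"
      and f' = tanh and g' = "\<lambda>t. t"])
  show "0 \<le> t \<Longrightarrow> tanh t \<le> t" for t :: real by (rule tanh_le_self)
qed (auto intro!: derivative_eq_intros has_real_derivative_ln_cosh)

lemma ln_cosh_ge_taylor4: "0 \<le> x \<Longrightarrow> (x::real)^2/2 - x^4/12 \<le> ln (cosh x)"
proof (rule le_if_deriv_le[where f = "\<lambda>t. t^2/2 - t^4/12" and g = "\<lambda>t. ln (cosh t)"
      and f' = "\<lambda>t. t - t^3/3" and g' = tanh])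
  show "0 \<le> t \<Longrightarrow> t - t^3/3 \<le> tanh t" for t :: real by (rule tanh_ge_taylor3)
qed (auto intro!: derivative_eq_intros has_real_derivative_ln_cosh)

lemma ln_cosh_le_taylor6:
  fixes x :: real
  assumes "0 \<le> x" "x^2 \<le> 3"
  shows "ln (cosh x) \<le> x^2/2 - x^4/12 + x^6/45"
proof (rule le_if_deriv_le[where f = "\<lambda>t. ln (cosh t)" and g = "\<lambda>t. t^2/2 - t^4/12 + t^6/45"
      and f' = tanh and g' = "\<lambda>t. t - t^3/3 + 2*t^5/15"])
  fix t :: real assume "0 \<le> t" "t \<le> x"
  moreover have "t^2 \<le> 3" using calculation assms power_mono[of t x 2] by linarith
  ultimately show "tanh t \<le> t - t^3/3 + 2*t^5/15" by (intro tanh_le_taylor5)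
qed (use assms in \<open>auto intro!: derivative_eq_intros has_real_derivative_ln_cosh\<close>)

lemma artanh_ge_taylor3:
  fixes r :: real
  assumes "0 \<le> r" "r < 1"
  shows "r + r^3/3 \<le> artanh r"
proof (rule le_if_deriv_le[where f = "\<lambda>t. t + t^3/3" and g = artanh
      and f' = "\<lambda>t. 1 + t^2" and g' = "\<lambda>t. 1 / (1 - t^2)"])
  fix t :: real assume "0 \<le> t" "t \<le> r"
  then have "\<bar>t\<bar> < 1" using assms by simp
  then show "(artanh has_real_derivative 1 / (1 - t^2)) (at t)"
    by (rule artanh_real_has_field_derivative)
  have "0 < 1 - t^2" using \<open>\<bar>t\<bar> < 1\<close> by (simp add: abs_square_less_1)
  moreover have "(1 + t^2) * (1 - t^2) = 1 - t^4"
    by (simp add: algebra_simps eval_nat_numeral)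
  ultimately show "1 + t^2 \<le> 1 / (1 - t^2)"
    by (simp add: le_divide_eq)
qed (use assms in \<open>auto intro!: derivative_eq_intros\<close>)

lemma cosh_eq_tanh_half:
  "cosh x = (1 + tanh (x/2)^2) / (1 - tanh (x/2)^2)" for x :: real
proof -
  define c s where "c = cosh (x/2)" and "s = sinh (x/2)"
  have "c \<noteq> 0" and pyth: "c^2 - s^2 = 1" and double: "cosh x = c^2 + s^2"
    using hyperbolic_pythagoras[of "x/2"] cosh_double[of "x/2"] by (auto simp: c_def s_def)
  have "1 - (s/c)^2 = (c^2 - s^2) / c^2"
    using \<open>c \<noteq> 0\<close> by (simp add: field_simps power_divide)
  then have "(1 + (s/c)^2) / (1 - (s/c)^2) = (1 + (s/c)^2) * c^2"
    using pyth by simp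
  also have "\<dots> = c^2 + s^2"
    using \<open>c \<noteq> 0\<close> by (simp add: field_simps power_divide)
  finally have "(1 + (s/c)^2) / (1 - (s/c)^2) = c^2 + s^2" .
  then show ?thesis
    using double by (simp add: tanh_def c_def s_def)
qed

text \<open>Since \<open>ln (cosh x) = 2 artanh (tanh\<^sup>2 (x/2))\<close>, this lower bound converges much
  faster near \<open>x = \<pi>/2\<close> than the Taylor series of \<open>ln \<circ> cosh\<close>, whose radius is \<open>\<pi>/2\<close>.\<close>

lemma ln_cosh_ge_tanh_half:
  fixes x :: real
  shows "2 * (tanh (x/2)^2 + (tanh (x/2)^2)^3/3) \<le> ln (cosh x)"
proof -
  define \<rho> where "\<rho> = tanh (x/2)^2"
  have "0 \<le> \<rho>" "\<rho> < 1"
    using tanh_real_bounds[of "x/2"] by (auto simp: \<rho>_def abs_square_less_1)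
  moreover have "ln (cosh x) = 2 * artanh \<rho>"
    by (simp add: artanh_def cosh_eq_tanh_half \<rho>_def)
  moreover have "\<rho> + \<rho>^3/3 \<le> artanh \<rho>"
    using calculation by (intro artanh_ge_taylor3)
  ultimately show ?thesis by (simp add: \<rho>_def)
qed

lemma ln_cosh_le_mult_tanh: "0 \<le> w \<Longrightarrow> ln (cosh w) \<le> w * tanh (w::real)"
proof (rule le_if_deriv_le[where f = "\<lambda>t. ln (cosh t)" and g = "\<lambda>t. t * tanh t"
      and f' = tanh and g' = "\<lambda>t. tanh t + t * (1 - tanh t ^ 2)"])
  show "0 \<le> t \<Longrightarrow> tanh t \<le> tanh t + t * (1 - tanh t ^ 2)" for t :: real
    using tanh_real_bounds[of t] by (simp add: abs_square_le_1)
qed (auto intro!: derivative_eq_intros has_real_derivative_ln_cosh)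

lemma ln_cosh_div_mono:
  fixes a b :: real
  assumes "0 < a" "a \<le> b"
  shows "ln (cosh a) / a \<le> ln (cosh b) / b"
proof (rule DERIV_nonneg_imp_nondecreasing[OF assms(2)])
  fix w assume "a \<le> w" "w \<le> b"
  then have "0 < w" using assms by simp
  then have "((\<lambda>t. ln (cosh t) / t) has_real_derivative (w * tanh w - ln (cosh w)) / w^2) (at w)"
    by (auto intro!: derivative_eq_intros simp: tanh_def field_simps power2_eq_square)
  moreover have "0 \<le> (w * tanh w - ln (cosh w)) / w^2"
    using ln_cosh_le_mult_tanh[of w] \<open>0 < w\<close> by simp
  ultimately show "\<exists>y. ((\<lambda>t. ln (cosh t) / t) has_real_derivative y) (at w) \<and> 0 \<le> y"
    by blast
qed

lemma ln_cosh_pos: "w \<noteq> 0 \<Longrightarrow> 0 < ln (cosh (w::real))"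
  using cosh_real_ge_1[of w] cosh_real_one_iff[of w] by (metis ln_gt_zero order_le_less)

subsection \<open>The function \<open>ln (sinh x / x)\<close>\<close>

definition ln_sinhc :: "real \<Rightarrow> real" where
  "ln_sinhc x = ln (sinh x / x)"

lemma ln_sinhc_half:
  assumes "0 < x"
  shows "ln_sinhc x = ln_sinhc (x/2) + ln (cosh (x/2))"
proof -
  have "sinh x / x = (sinh (x/2) / (x/2)) * cosh (x/2)"
    using sinh_double[of "x/2"] assms by (simp add: field_simps)
  moreover have "0 < sinh (x/2) / (x/2)" using assms by simp
  ultimately show ?thesis
    unfolding ln_sinhc_def using ln_mult_pos[OF _ cosh_real_pos] by presburger
qed

lemma sinh_ge_self: "0 \<le> x \<Longrightarrow> x \<le> sinh (x::real)"
  by (rule le_if_deriv_le[where f = "\<lambda>t. t" and g = sinh and f' = "\<lambda>_. 1" and g' = cosh])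
    (auto intro!: derivative_eq_intros simp: cosh_real_ge_1)

lemma ln_sinhc_nonneg: "0 < x \<Longrightarrow> 0 \<le> ln_sinhc x"
  using sinh_ge_self[of x] by (simp add: ln_sinhc_def)

lemma ln_sinhc_le_ln_cosh:
  assumes "0 < x"
  shows "ln_sinhc x \<le> ln (cosh x)"
proof -
  have "sinh x \<le> x * cosh x"
    using tanh_le_self[of x] assms cosh_real_pos[of x] by (simp add: tanh_def divide_le_eq)
  then have "sinh x / x \<le> cosh x"
    using assms by (simp add: divide_le_eq mult.commute)
  then show ?thesis
    using assms by (simp add: ln_sinhc_def)
qed

text \<open>The upper polynomial is chosen so that its difference at \<open>w\<close> and \<open>w/2\<close> is exactly
  the sixth-order bound for \<open>ln (cosh (w/2))\<close>; likewise for the lower one.\<close>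

lemma ln_sinhc_le_taylor6:
  assumes "0 < x" "x^2 \<le> 12"
  shows "ln_sinhc x \<le> x^2/6 - x^4/180 + x^6/2835"
proof -
  define U :: "real \<Rightarrow> real" where "U w = w^2/6 - w^4/180 + w^6/2835" for w
  have "0 \<le> U x - ln_sinhc x"
  proof (rule nonneg_by_halving[where g = "\<lambda>w. U w - ln_sinhc w" and c = "x^2/2"])
    fix w :: real assume "0 < w" "w \<le> x"
    then have "w^2 \<le> x^2" by (simp add: power_mono)
    then have "(w/2)^2 \<le> 3"
      using assms by (simp add: power_divide)
    moreover have "U w - U (w/2) = (w/2)^2/2 - (w/2)^4/12 + (w/2)^6/45"
      by (simp add: U_def field_simps eval_nat_numeral)
    ultimately have "ln (cosh (w/2)) \<le> U w - U (w/2)"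
      using ln_cosh_le_taylor6[of "w/2"] \<open>0 < w\<close> by simp
    then show "U (w/2) - ln_sinhc (w/2) \<le> U w - ln_sinhc w"
      using ln_sinhc_half[OF \<open>0 < w\<close>] by linarith
  next
    fix n :: nat
    define v where "v = x / 2^n"
    have "0 < v" using assms by (simp add: v_def)
    have v2: "v^2 = x^2 / 4^n"
      by (simp add: v_def power2_div_two_pow)
    then have "v^2 \<le> x^2"
      by (simp add: divide_le_eq mult_le_cancel_left1)
    then have "v^2 * v^2 \<le> 12 * v^2"
      using assms by (intro mult_right_mono) auto
    then have "v^4 \<le> 12 * v^2"
      by (simp add: eval_nat_numeral)
    moreover have "0 \<le> v^6" by simp
    ultimately have "0 \<le> U v"
      unfolding U_def using zero_le_power2[of v] by linarith
    moreover have "ln_sinhc v \<le> v^2/2"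
      using ln_sinhc_le_ln_cosh[OF \<open>0 < v\<close>] ln_cosh_le_square_half[of v] \<open>0 < v\<close> by simp
    ultimately show "- (x^2/2) / 4^n \<le> U (x / 2^n) - ln_sinhc (x / 2^n)"
      using v2 by (simp add: v_def)
  qed (use assms in auto)
  then show ?thesis by (simp add: U_def)
qed

lemma ln_sinhc_ge_taylor4:
  assumes "0 < x"
  shows "x^2/6 - x^4/180 \<le> ln_sinhc x"
proof -
  define W :: "real \<Rightarrow> real" where "W w = w^2/6 - w^4/180" for w
  have "0 \<le> ln_sinhc x - W x"
  proof (rule nonneg_by_halving[where g = "\<lambda>w. ln_sinhc w - W w" and c = "x^2/6"])
    fix w :: real assume "0 < w" "w \<le> x"
    then have "W w - W (w/2) \<le> ln (cosh (w/2))"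
      using ln_cosh_ge_taylor4[of "w/2"] by (simp add: W_def field_simps eval_nat_numeral)
    then show "ln_sinhc (w/2) - W (w/2) \<le> ln_sinhc w - W w"
      using ln_sinhc_half[OF \<open>0 < w\<close>] by linarith
  next
    fix n :: nat
    define v where "v = x / 2^n"
    have "0 \<le> ln_sinhc v" "0 \<le> v^4"
      using assms ln_sinhc_nonneg by (simp_all add: v_def)
    then have "- (v^2/6) \<le> ln_sinhc v - W v"
      by (simp add: W_def)
    then show "- (x^2/6) / 4^n \<le> ln_sinhc (x / 2^n) - W (x / 2^n)"
      by (simp add: v_def power2_div_two_pow)
  qed (use assms in auto)
  then show ?thesis by (simp add: W_def)
qed

lemma ln_sinhc_pos:
  assumes "0 < x" "x^2 \<le> 3"
  shows "0 < ln_sinhc x"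
proof -
  have "x^2 * x^2 \<le> x^2 * 3"
    using assms by (intro mult_left_mono) auto
  then have "0 < x^2/6 - x^4/180"
    using assms by (simp add: eval_nat_numeral)
  then show ?thesis
    using ln_sinhc_ge_taylor4[OF assms(1)] by linarith
qed

lemma ln_cosh_le_three_ln_sinhc:
  assumes "0 < x" "x^2 \<le> 3"
  shows "ln (cosh x) \<le> 3 * ln_sinhc x"
proof -
  have "x^4 * x^2 \<le> x^4 * 3"
    using assms by (intro mult_left_mono) auto
  then have "x^6 \<le> x^4 * 3"
    by (simp add: eval_nat_numeral)
  then show ?thesis
    using ln_sinhc_ge_taylor4[OF assms(1)] ln_cosh_le_taylor6[of x] assms by simp
qed

subsection \<open>Reduction to an inequality between logarithms\<close>

lemma powr_ineq_iff_ln_cosh_ineq: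
  assumes "0 < x"
  shows "2 * (tanh x / x) powr p < (x / sinh x) powr (4 * p) + 1
    \<longleftrightarrow> p * (3 * ln_sinhc x - ln (cosh x)) < ln (cosh (2 * p * ln_sinhc x))"
proof -
  define L l where "L = ln_sinhc x" and "l = ln (cosh x)"
  have "ln (tanh x / x) = ln ((sinh x / x) / cosh x)"
    by (simp add: tanh_def mult.commute)
  also have "\<dots> = L - l"
    unfolding L_def l_def ln_sinhc_def using assms by (intro ln_divide_pos) auto
  finally have A: "(tanh x / x) powr p = exp (p * (L - l))"
    using assms by (simp add: powr_def mult.commute)
  have "ln (x / sinh x) = - L"
    using assms by (simp add: L_def ln_sinhc_def ln_div)
  moreover have "(x / sinh x) powr (4 * p) = exp (4 * p * ln (x / sinh x))"
    using assms by (simp add: powr_def)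
  ultimately have "(x / sinh x) powr (4 * p) = exp (4 * p * (- L))"
    by (simp only:)
  then have B: "(x / sinh x) powr (4 * p) = exp (- (2 * p * L)) * exp (- (2 * p * L))"
    by (simp add: algebra_simps flip: exp_add)
  \<comment> \<open>\<open>e\<^sup>-\<^sup>2\<^sup>a + 1 = 2 e\<^sup>-\<^sup>a cosh a\<close> with \<open>a = 2 p L\<close>\<close>
  have "(x / sinh x) powr (4 * p) + 1 = 2 * exp (- (2 * p * L)) * cosh (2 * p * L)"
    unfolding B by (simp add: cosh_def field_simps flip: exp_add)
  then have "2 * (tanh x / x) powr p < (x / sinh x) powr (4 * p) + 1
      \<longleftrightarrow> exp (p * (L - l)) < exp (- (2 * p * L)) * cosh (2 * p * L)"
    by (simp add: A)
  also have "\<dots> \<longleftrightarrow> exp (p * (L - l)) * exp (2 * p * L) < cosh (2 * p * L)"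
    by (simp add: exp_minus field_simps)
  also have "exp (p * (L - l)) * exp (2 * p * L) = exp (p * (3 * L - l))"
    by (simp add: algebra_simps flip: exp_add)
  also have "\<dots> < cosh (2 * p * L) \<longleftrightarrow> p * (3 * L - l) < ln (cosh (2 * p * L))"
    by (metis cosh_real_pos exp_less_cancel_iff exp_ln)
  finally show ?thesis
    by (simp add: L_def l_def)
qed

subsection \<open>The critical exponent \<open>6/5\<close>\<close>

lemma square_le_of_less_pi_half:
  assumes "0 < x" "x < pi/2"
  shows "x^2 \<le> 987/400"
proof -
  have "x \<le> 3.1415926535899/2" using assms pi_approx(2) by simp
  then have "x^2 \<le> (3.1415926535899/2)^2" using assms by (intro power_mono) auto
  then show ?thesis by (simp add: power2_eq_square)
qed

text \<open>The substitution \<open>d = 987/400 - x\<^sup>2\<close> turns the difference of the two sides into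
  \<open>x\<^sup>6\<close> times a polynomial in \<open>d\<close> with positive coefficients.\<close>

lemma critical_polynomial_ineq:
  fixes x u :: real
  assumes "0 < x" "x^2 \<le> 987/400" "u = x^2/6 - x^4/180 + x^6/2835"
  shows "3*u - 12/5*u^2 + 288/125*(x^2/6)^4
    < 2 * ((x/2 - (x/2)^3/3 + 2*(x/2)^5/15 - 17*(x/2)^7/315)^2 + ((x/2)^2 - 2*(x/2)^4/3)^3/3)"
proof -
  define d where "d = 987/400 - x^2"
  define q :: real where "q = 4818542728345127/2972712960000000000
    + 8164508102939/1857945600000000 * d + 196059847/344064000000 * d^2
    + 112905479/2194698240000 * d^3 + 289/812851200 * d^4"
  have "2 * ((x/2 - (x/2)^3/3 + 2*(x/2)^5/15 - 17*(x/2)^7/315)^2 + ((x/2)^2 - 2*(x/2)^4/3)^3/3)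
      - (3*u - 12/5*u^2 + 288/125*(x^2/6)^4) = x^6 * q"
    unfolding q_def d_def assms(3) by (simp add: field_simps eval_nat_numeral)
  moreover have "0 < q"
    using assms(2) unfolding q_def d_def by (intro add_pos_nonneg mult_nonneg_nonneg) auto
  ultimately show ?thesis
    using assms(1) by (metis diff_gt_0_iff_gt mult_pos_pos zero_less_power)
qed

lemma tanh_square_ge_polys:
  fixes z :: real
  assumes "0 \<le> z" "z \<le> 1"
  shows "(z - z^3/3 + 2*z^5/15 - 17*z^7/315)^2 \<le> tanh z ^ 2"
    and "(z^2 - 2*z^4/3)^3 \<le> (tanh z ^ 2)^3"
proof -
  have "z^2 \<le> 1" "z^6 \<le> z^4" "z^4 \<le> z^2" "0 \<le> z^4" "0 \<le> z^6"
    using assms by (simp_all add: power_le_one power_decreasing)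
  have "0 \<le> 1 - z^2/3 + 2*z^4/15 - 17*z^6/315"
    using \<open>z^6 \<le> z^4\<close> \<open>z^4 \<le> z^2\<close> \<open>0 \<le> z^4\<close> \<open>z^2 \<le> 1\<close> by linarith
  moreover have "z - z^3/3 + 2*z^5/15 - 17*z^7/315 = z * (1 - z^2/3 + 2*z^4/15 - 17*z^6/315)"
    by (simp add: algebra_simps eval_nat_numeral)
  ultimately have "0 \<le> z - z^3/3 + 2*z^5/15 - 17*z^7/315"
    using assms by simp
  then show "(z - z^3/3 + 2*z^5/15 - 17*z^7/315)^2 \<le> tanh z ^ 2"
    using tanh_ge_taylor7[OF \<open>0 \<le> z\<close>] \<open>z^2 \<le> 1\<close> by (intro power_mono) auto
  have "z - z^3/3 = z * (1 - z^2/3)"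
    by (simp add: algebra_simps eval_nat_numeral)
  then have "0 \<le> z - z^3/3"
    using assms \<open>z^2 \<le> 1\<close> by simp
  then have "(z - z^3/3)^2 \<le> tanh z ^ 2"
    using tanh_ge_taylor3[OF \<open>0 \<le> z\<close>] by (intro power_mono) auto
  moreover have "(z - z^3/3)^2 = z^2 - 2*z^4/3 + z^6/9"
    by (simp add: algebra_simps eval_nat_numeral)
  ultimately have "z^2 - 2*z^4/3 \<le> tanh z ^ 2"
    using \<open>0 \<le> z^6\<close> by linarith
  moreover have "0 \<le> z^2 - 2*z^4/3"
    using \<open>z^4 \<le> z^2\<close> \<open>0 \<le> z^4\<close> by linarith
  ultimately show "(z^2 - 2*z^4/3)^3 \<le> (tanh z ^ 2)^3"
    by (intro power_mono) auto
qed

lemma ln_cosh_gt_critical_polynomial: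
  fixes x u :: real
  assumes "0 < x" "x^2 \<le> 987/400" "u = x^2/6 - x^4/180 + x^6/2835"
  shows "3*u - 12/5*u^2 + 288/125*(x^2/6)^4 < ln (cosh x)"
proof -
  define z t7 where "z = x/2" and "t7 = z - z^3/3 + 2*z^5/15 - 17*z^7/315"
  have "z^2 \<le> 1"
    using assms by (simp add: z_def power_divide)
  then have "0 \<le> z" "z \<le> 1"
    using assms by (simp_all add: z_def abs_square_le_1)
  have "3*u - 12/5*u^2 + 288/125*(x^2/6)^4 < 2 * (t7^2 + (z^2 - 2*z^4/3)^3/3)"
    unfolding t7_def z_def by (rule critical_polynomial_ineq[OF assms])
  also have "\<dots> \<le> 2 * (tanh z ^ 2 + (tanh z ^ 2)^3/3)"
    using tanh_square_ge_polys[OF \<open>0 \<le> z\<close> \<open>z \<le> 1\<close>] by (simp add: t7_def)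
  also have "\<dots> \<le> ln (cosh x)"
    using ln_cosh_ge_tanh_half[of x] by (simp add: z_def)
  finally show ?thesis .
qed

lemma ln_cosh_ineq_critical:
  assumes "0 < x" "x < pi/2"
  shows "6/5 * (3 * ln_sinhc x - ln (cosh x)) < ln (cosh (2 * (6/5) * ln_sinhc x))"
proof -
  have "x^2 \<le> 987/400"
    using assms by (intro square_le_of_less_pi_half)
  define L u where "L = ln_sinhc x" and "u = x^2/6 - x^4/180 + x^6/2835"
  have "0 \<le> L" "L \<le> u"
    using assms \<open>x^2 \<le> 987/400\<close> ln_sinhc_nonneg ln_sinhc_le_taylor6
    by (auto simp: L_def u_def)
  have "x^4 * x^2 \<le> x^4 * 3"
    using \<open>x^2 \<le> 987/400\<close> by (intro mult_left_mono) auto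
  then have "x^6 \<le> x^4 * 3"
    by (simp add: eval_nat_numeral)
  moreover have "0 \<le> x^4" by simp
  ultimately have "u \<le> x^2/6"
    unfolding u_def by linarith
  \<comment> \<open>\<open>t \<mapsto> 3 t - 12/5 t\<^sup>2\<close> increases on \<open>[0, 5/8]\<close>\<close>
  have "(3*u - 12/5*u^2) - (3*L - 12/5*L^2) = (u - L) * (3 - 12/5 * (u + L))"
    by (simp add: field_simps power2_eq_square)
  moreover have "u + L \<le> 5/4"
    using \<open>L \<le> u\<close> \<open>u \<le> x^2/6\<close> \<open>x^2 \<le> 987/400\<close> by simp
  moreover have "0 \<le> (u - L) * (3 - 12/5 * (u + L))"
    using \<open>L \<le> u\<close> \<open>u + L \<le> 5/4\<close> by (intro mult_nonneg_nonneg) auto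
  ultimately have "3*L - 12/5*L^2 \<le> 3*u - 12/5*u^2"
    by linarith
  moreover have "L^4 \<le> (x^2/6)^4"
    using \<open>0 \<le> L\<close> \<open>L \<le> u\<close> \<open>u \<le> x^2/6\<close> by (intro power_mono) auto
  moreover have "3*u - 12/5*u^2 + 288/125*(x^2/6)^4 < ln (cosh x)"
    using assms(1) \<open>x^2 \<le> 987/400\<close> u_def by (rule ln_cosh_gt_critical_polynomial)
  moreover have "(2 * (6/5) * L)^2/2 = 72/25 * L^2" "(2 * (6/5) * L)^4/12 = 1728/625 * L^4"
    by (simp_all add: power_mult_distrib power_divide)
  then have "72/25 * L^2 - 1728/625 * L^4 \<le> ln (cosh (2 * (6/5) * L))"
    using ln_cosh_ge_taylor4[of "2 * (6/5) * L"] \<open>0 \<le> L\<close> by simp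
  ultimately show ?thesis
    unfolding L_def by (simp add: field_simps)
qed

lemma ln_cosh_ineq_above_critical:
  assumes "0 < x" "x < pi/2" "6/5 \<le> p"
  shows "p * (3 * ln_sinhc x - ln (cosh x)) < ln (cosh (2 * p * ln_sinhc x))"
proof -
  define L D a b where "L = ln_sinhc x" and "D = 3 * L - ln (cosh x)"
    and "a = 2 * (6/5) * L" and "b = 2 * p * L"
  have "0 < L"
    using assms square_le_of_less_pi_half ln_sinhc_pos by (force simp: L_def)
  then have "0 < a" "a \<le> b"
    using assms(3) by (simp_all add: a_def b_def)
  have "p * D = p / (6/5) * (6/5 * D)" by simp
  also have "\<dots> < p / (6/5) * ln (cosh a)"
    using ln_cosh_ineq_critical[OF assms(1,2)] assms(3)
    by (intro mult_strict_left_mono) (auto simp: D_def a_def L_def)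
  also have "\<dots> = b * (ln (cosh a) / a)"
    using \<open>0 < a\<close> by (simp add: a_def b_def field_simps)
  also have "\<dots> \<le> b * (ln (cosh b) / b)"
    using ln_cosh_div_mono[OF \<open>0 < a\<close> \<open>a \<le> b\<close>] \<open>0 < a\<close> \<open>a \<le> b\<close> by (intro mult_left_mono) auto
  also have "\<dots> = ln (cosh b)"
    using \<open>0 < a\<close> \<open>a \<le> b\<close> by simp
  finally show ?thesis by (simp add: D_def L_def b_def)
qed

lemma ln_cosh_ineq_negative:
  assumes "0 < x" "x < pi/2" "p < 0"
  shows "p * (3 * ln_sinhc x - ln (cosh x)) < ln (cosh (2 * p * ln_sinhc x))"
proof -
  have "x^2 \<le> 3"
    using square_le_of_less_pi_half[OF assms(1,2)] by simp
  then have "p * (3 * ln_sinhc x - ln (cosh x)) \<le> 0"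
    using ln_cosh_le_three_ln_sinhc[OF assms(1)] assms(3) by (intro mult_nonpos_nonneg) auto
  also have "0 < ln (cosh (2 * p * ln_sinhc x))"
    using ln_sinhc_pos[OF assms(1) \<open>x^2 \<le> 3\<close>] assms(3) by (intro ln_cosh_pos) simp
  finally show ?thesis .
qed

text \<open>At \<open>x\<^sup>2 = y\<close> one has \<open>p (3 L x - ln (cosh x)) \<ge> p (y\<^sup>2/15 - y\<^sup>3/45)\<close> while
  \<open>ln (cosh (2 p L x)) \<le> p\<^sup>2 y\<^sup>2/18\<close>; for \<open>y = 3/2 - 5p/4\<close> the first bound dominates.\<close>

lemma ln_cosh_ineq_fails_at:
  assumes "0 < p" "p < 6/5" "0 < x" "x^2 = 3/2 - 5*p/4"
  shows "ln (cosh (2 * p * ln_sinhc x)) \<le> p * (3 * ln_sinhc x - ln (cosh x))"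
proof -
  define y L where "y = 3/2 - 5*p/4" and "L = ln_sinhc x"
  have "x^2 = y" "y \<le> 3/2" using assms by (simp_all add: y_def)
  then have "x^4 = y^2" "x^6 = y^3"
    by (simp_all flip: \<open>x^2 = y\<close> power_mult)
  have "0 \<le> L" using \<open>0 < x\<close> ln_sinhc_nonneg by (simp add: L_def)
  have "y^2 * y \<le> y^2 * 3" using \<open>y \<le> 3/2\<close> by (intro mult_left_mono) auto
  then have "y^3 \<le> y^2 * 3" by (simp add: eval_nat_numeral)
  moreover have "L \<le> y/6 - y^2/180 + y^3/2835"
    using ln_sinhc_le_taylor6[OF \<open>0 < x\<close>] \<open>x^2 = y\<close> \<open>x^4 = y^2\<close> \<open>x^6 = y^3\<close> \<open>y \<le> 3/2\<close>
    by (simp add: L_def)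
  moreover have "0 \<le> y^2" by simp
  ultimately have "L \<le> y/6" by linarith
  have "ln (cosh (2 * p * L)) \<le> (2 * p * L)^2/2"
    using \<open>0 \<le> L\<close> assms by (intro ln_cosh_le_square_half) simp
  also have "\<dots> = 2 * p^2 * L^2" by (simp add: power_mult_distrib)
  also have "\<dots> \<le> 2 * p^2 * (y/6)^2"
    using \<open>0 \<le> L\<close> \<open>L \<le> y/6\<close> by (intro mult_left_mono power_mono) auto
  also have "\<dots> \<le> p * (y^2/15 - y^3/45)"
  proof -
    have "p * (y^2/15 - y^3/45) - 2 * p^2 * (y/6)^2 = p * y^2 * (1/15 - y/45 - p/18)"
      by (simp add: field_simps eval_nat_numeral)
    moreover have "0 \<le> 1/15 - y/45 - p/18"
      using assms by (simp add: y_def field_simps)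
    then have "0 \<le> p * y^2 * (1/15 - y/45 - p/18)"
      using assms by simp
    ultimately show ?thesis by linarith
  qed
  also have "\<dots> \<le> p * (3 * L - ln (cosh x))"
  proof -
    have "y/6 - y^2/180 \<le> L"
      using ln_sinhc_ge_taylor4[OF \<open>0 < x\<close>] \<open>x^2 = y\<close> \<open>x^4 = y^2\<close> by (simp add: L_def)
    moreover have "ln (cosh x) \<le> y/2 - y^2/12 + y^3/45"
      using ln_cosh_le_taylor6[of x] \<open>0 < x\<close> \<open>x^2 = y\<close> \<open>x^4 = y^2\<close> \<open>x^6 = y^3\<close> \<open>y \<le> 3/2\<close>
      by simp
    ultimately show ?thesis using assms by (intro mult_left_mono) auto
  qed
  finally show ?thesis by (simp add: L_def)
qed

lemma ln_cosh_ineq_fails_below_critical: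
  assumes "0 < p" "p < 6/5"
  obtains x where "0 < x" "x < pi/2"
    "ln (cosh (2 * p * ln_sinhc x)) \<le> p * (3 * ln_sinhc x - ln (cosh x))"
proof
  define x where "x = sqrt (3/2 - 5*p/4)"
  have "0 < 3/2 - 5*p/4" using assms by simp
  then show "0 < x" by (simp add: x_def)
  have "x^2 = 3/2 - 5*p/4"
    using \<open>0 < 3/2 - 5*p/4\<close> by (simp add: x_def)
  then have "x^2 < (3/2)^2"
    using assms by (simp add: power2_eq_square)
  then have "x < 3/2"
    using \<open>0 < x\<close> power_less_imp_less_base[of x 2 "3/2"] by simp
  then show "x < pi/2"
    using pi_gt3 by simp
  show "ln (cosh (2 * p * ln_sinhc x)) \<le> p * (3 * ln_sinhc x - ln (cosh x))"
    using assms \<open>0 < x\<close> \<open>x^2 = 3/2 - 5*p/4\<close> by (rule ln_cosh_ineq_fails_at)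
qed

theorem proposition4p14:
  fixes p :: real
  assumes "p \<noteq> 0"
  shows "(\<forall>x::real. 0 < x \<and> x < pi / 2 \<longrightarrow>
            2 * (tanh x / x) powr p < (x / sinh x) powr (4 * p) + 1)
         \<longleftrightarrow> (p < 0 \<or> p \<ge> 6 / 5)"
proof
  assume holds: "\<forall>x::real. 0 < x \<and> x < pi / 2 \<longrightarrow>
            2 * (tanh x / x) powr p < (x / sinh x) powr (4 * p) + 1"
  show "p < 0 \<or> p \<ge> 6 / 5"
  proof (rule ccontr)
    assume "\<not> (p < 0 \<or> p \<ge> 6 / 5)"
    with assms have "0 < p" "p < 6/5" by auto
    then obtain x where "0 < x" "x < pi/2"
      "ln (cosh (2 * p * ln_sinhc x)) \<le> p * (3 * ln_sinhc x - ln (cosh x))"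
      by (rule ln_cosh_ineq_fails_below_critical)
    with holds show False
      using powr_ineq_iff_ln_cosh_ineq[of x p] by auto
  qed
next
  assume "p < 0 \<or> p \<ge> 6 / 5"
  then show "\<forall>x::real. 0 < x \<and> x < pi / 2 \<longrightarrow>
            2 * (tanh x / x) powr p < (x / sinh x) powr (4 * p) + 1"
    using ln_cosh_ineq_negative ln_cosh_ineq_above_critical powr_ineq_iff_ln_cosh_ineq
    by blast
qed

end
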